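(* Let $\mathbf{f}$ be the Fibonacci word, $\phi=\frac{1+\sqrt5}{2}$, and fix a positive integer $n$. Let $\ell$ be a positive integer such that $$\phi^{-n+1}\le \min\big(\{2\ell F_n\phi\},\,1-\{2\ell F_n\phi\}\big).$$ Then for every index $x\ge 0$, $$\mathbf{f}_{[x,\,x+2F_n]}\neq \mathbf{f}_{[x+2\ell F_n,\,x+2\ell F_n+2F_n]}.$$
   Context: The Fibonacci word is $\mathbf{f}=\sigma^{\omega}(0)=0100101001001\cdots$, the fixed point of the morphism $\sigma(0)=01$, $\sigma(1)=0$. Words are $0$-indexed and $v_{[i,j]}$ denotes the substring of $v$ with letters at indices $i,\dots,j-1$. $F_1=F_2=1$, $F_n=F_{n-1}+F_{n-2}$. $\{y\}$ denotes the fractional part of a real number $y$. *)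

theory Defs
  imports Complex_Main "HOL-Number_Theory.Fib"
begin

fun sigma_letter :: "nat \<Rightarrow> nat list" where
  "sigma_letter a = (if a = 0 then [0, 1] else [0])"

definition sigma :: "nat list \<Rightarrow> nat list" where
  "sigma w = concat (map sigma_letter w)"

text \<open>sigma^k(0); each is a prefix of the next, and its length is F(k+2) > k.\<close>
definition fib_prefix :: "nat \<Rightarrow> nat list" where
  "fib_prefix k = (sigma ^^ k) [0]"

text \<open>The infinite Fibonacci word f = sigma^omega(0), 0-indexed.\<close>
definition fib_word :: "nat \<Rightarrow> nat" where
  "fib_word i = fib_prefix (Suc i) ! i"

text \<open>Factor f_[i,j]: letters at indices i..j-1.\<close>
definition fib_factor :: "nat \<Rightarrow> nat \<Rightarrow> nat list" where
  "fib_factor i j = map fib_word [i..<j]"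

definition phi :: real where
  "phi = (1 + sqrt 5) / 2"

end

(* The Fibonacci word is the Sturmian word of slope 1/phi: f_i = 0 exactly when the Beatty
   sequence b(t) = floor(t phi) jumps by 2 from t = i + 1 to t = i + 2.  This follows by induction
   on sigma^k(0) from the Wythoff identities b(b(s)) = b(s) + s - 1, b(b(s) + 1) = b(s) + s + 1
   (and b(b(s) + 2) = b(s) + s + 2 after a jump of 2), which say how sigma rewrites each letter.

   If the factors of length m = 2 F_n at x and x + d coincide, then b(t + d) - b(t) is constant
   for t in [x + 1, x + m + 1]; since b(t + d) - b(t) = floor(d phi) + [frac(t phi) + theta >= 1]
   with theta = frac(d phi), so is the carry [frac(t phi) + theta >= 1].  But with n = k + 1,
   every F_(k+2) <= m consecutive values frac(t phi) meet every interval of length phi^-k: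
   for j = a F_(k+1) + b F_k one has j phi = a e_(k+1) + b e_k mod 1 with e_k = F_k phi - F_(k+1)
   = (-1)^k phi^-k, and a, b can be chosen with j in a prescribed window of length F_(k+2) and
   a e_(k+1) + b e_k in a prescribed interval of length phi^-k.  As theta keeps distance phi^-k
   from 0 and 1, both carry values occur, a contradiction. *)

theory Submission
  imports Defs "HOL-Computational_Algebra.Primes"
begin

lemma sqrt_prime_irrational:
  assumes "prime (p :: nat)"
  shows "sqrt p \<notin> \<rat>"
proof
  assume "sqrt p \<in> \<rat>"
  then obtain m n :: nat where n: "n \<noteq> 0" and sqrt_eq: "\<bar>sqrt p\<bar> = m / n" and "coprime m n"
    by (rule Rats_abs_nat_div_natE)
  have "real m = sqrt p * n" using n sqrt_eq by (simp add: field_simps)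
  then have "real (m^2) = p * real (n^2)" by (simp add: power_mult_distrib)
  then have m_sq: "m^2 = p * n^2" by (simp only: of_nat_mult [symmetric] of_nat_eq_iff)
  then have "p dvd m" using assms prime_dvd_power by (metis dvd_triv_left)
  then obtain k where "m = p * k" ..
  with m_sq have "p * (p * k^2) = p * n^2" by (simp add: power2_eq_square mult_ac)
  then have "n^2 = p * k^2" using prime_gt_0_nat[OF assms] by simp
  then have "p dvd n" using assms prime_dvd_power by (metis dvd_triv_left)
  with \<open>p dvd m\<close> \<open>coprime m n\<close> assms show False
    using coprime_common_divisor_nat not_prime_1 by blast
qed

lemma phi_squared: "phi^2 = phi + 1"
  unfolding phi_def by (simp add: power2_eq_square field_simps)

lemma phi_bounds: "8/5 < phi" "phi < 33/20"
proof -
  have "11/5 < sqrt 5" by (rule real_less_rsqrt) (simp add: power2_eq_square)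
  moreover have "sqrt 5 < 23/10" by (rule real_less_lsqrt) (simp_all add: power2_eq_square)
  ultimately show "8/5 < phi" "phi < 33/20" unfolding phi_def by simp_all
qed

lemma of_nat_mult_phi_not_int:
  assumes "t > 0"
  shows "real t * phi \<noteq> of_int k"
proof
  assume "real t * phi = of_int k"
  then have "sqrt (real 5) = (2 * of_int k - real t) / real t"
    using assms unfolding phi_def by (simp add: field_simps)
  also have "\<dots> \<in> \<rat>" by simp
  finally show False using sqrt_prime_irrational[of 5] by simp
qed

definition beatty :: "nat \<Rightarrow> int" where
  "beatty t = \<lfloor>real t * phi\<rfloor>"

definition beatty_letter :: "nat \<Rightarrow> nat" where
  "beatty_letter i = (if beatty (i + 2) - beatty (i + 1) = 2 then 0 else 1)"

lemma beatty_Suc_cases: "beatty (Suc t) = beatty t + 1 \<or> beatty (Suc t) = beatty t + 2"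
proof -
  have "real (Suc t) * phi = real t * phi + phi" by (simp add: algebra_simps)
  then have "beatty t + 1 \<le> beatty (Suc t) \<and> beatty (Suc t) < beatty t + 3"
    unfolding beatty_def using phi_bounds by (simp add: le_floor_iff floor_less_iff) linarith
  then show ?thesis by linarith
qed

lemma beatty_pos:
  assumes "t > 0"
  shows "1 \<le> beatty t"
proof -
  have "1 * 1 \<le> real t * phi" using assms phi_bounds by (intro mult_mono) auto
  then show ?thesis unfolding beatty_def by (simp add: le_floor_iff)
qed

lemma beatty_letter_eq_iff:
  "beatty_letter i = beatty_letter j \<longleftrightarrow>
     beatty (i + 2) - beatty (i + 1) = beatty (j + 2) - beatty (j + 1)"
  using beatty_Suc_cases[of "i + 1"] beatty_Suc_cases[of "j + 1"]
  unfolding beatty_letter_def by auto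

lemma frac_mult_phi_pos:
  assumes "t > 0"
  shows "0 < frac (real t * phi)"
  using of_nat_mult_phi_not_int[OF assms, of "\<lfloor>real t * phi\<rfloor>"] frac_ge_0[of "real t * phi"]
  unfolding frac_def by linarith

lemma beatty_mult_phi:
  "of_int (beatty s) * phi = of_int (beatty s) + real s - frac (real s * phi) * (phi - 1)"
proof -
  have "of_int (beatty s) * phi = (real s * phi - frac (real s * phi)) * phi"
    unfolding beatty_def frac_def by simp
  also have "\<dots> = real s * phi^2 - frac (real s * phi) * phi"
    by (simp add: power2_eq_square algebra_simps)
  also have "\<dots> = of_int (beatty s) + real s - frac (real s * phi) * (phi - 1)"
    unfolding phi_squared beatty_def frac_def by (simp add: algebra_simps)
  finally show ?thesis .
qed

lemma beatty_nat_add: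
  "0 \<le> q \<Longrightarrow> beatty (nat q + c) = \<lfloor>(of_int q + real c) * phi\<rfloor>"
  unfolding beatty_def by simp

lemma beatty_beatty:
  assumes "s > 0"
  shows "beatty (nat (beatty s)) = beatty s + int s - 1"
    and "beatty (nat (beatty s) + 1) = beatty s + int s + 1"
    and "beatty (s + 1) = beatty s + 2 \<Longrightarrow> beatty (nat (beatty s) + 2) = beatty s + int s + 2"
proof -
  define r where "r = frac (real s * phi)"
  define w where "w = r * (phi - 1)"
  have r: "0 < r" "r < 1" unfolding r_def using frac_mult_phi_pos[OF assms] by (simp_all add: frac_lt_1)
  have w: "0 < w" "w < phi - 1"
    unfolding w_def using r phi_bounds by (simp_all add: mult_less_cancel_right1)
  have q: "0 \<le> beatty s" using beatty_pos[OF assms] by simp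
  have shifted: "(of_int (beatty s) + real c) * phi = of_int (beatty s) + real s + (real c * phi - w)"
    for c
    using beatty_mult_phi[of s, folded r_def w_def] by (simp add: algebra_simps)
  show "beatty (nat (beatty s)) = beatty s + int s - 1"
    using beatty_nat_add[OF q, of 0] shifted[of 0] w phi_bounds by (simp add: floor_eq_iff)
  show "beatty (nat (beatty s) + 1) = beatty s + int s + 1"
    using beatty_nat_add[OF q, of 1] shifted[of 1] w phi_bounds by (simp add: floor_eq_iff)
  assume jump: "beatty (s + 1) = beatty s + 2"
  have sum: "real (s + 1) * phi = of_int (beatty s) + r + phi"
    unfolding r_def beatty_def frac_def by (simp add: algebra_simps)
  have "2 - phi \<le> r"
    using jump r phi_bounds unfolding beatty_def[of "s + 1"] sum by (simp add: floor_eq_iff)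
  moreover have "r \<noteq> 2 - phi"
    using of_nat_mult_phi_not_int[of "s + 1" "beatty s + 2"] sum by auto
  ultimately have "(2 - phi) * (phi - 1) < w"
    unfolding w_def using phi_bounds by (simp add: mult_strict_right_mono)
  moreover have "(2 - phi) * (phi - 1) = 2 * phi - 3"
    using phi_squared by (simp add: power2_eq_square algebra_simps)
  ultimately show "beatty (nat (beatty s) + 2) = beatty s + int s + 2"
    using beatty_nat_add[OF q, of 2] shifted[of 2] w phi_bounds by (simp add: floor_eq_iff)
qed

lemma beatty_letter_pred_beatty:
  assumes "s > 0"
  shows "beatty_letter (nat (beatty s) - 1) = 0"
proof -
  have "nat (beatty s) - 1 + 1 = nat (beatty s)" using beatty_pos[OF assms] by simp
  then show ?thesis
    using beatty_beatty(1,2)[OF assms] unfolding beatty_letter_def by (simp add: numeral_2_eq_2)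
qed

lemma beatty_letter_beatty:
  assumes "s > 0" and "beatty (s + 1) = beatty s + 2"
  shows "beatty_letter (nat (beatty s)) = 1"
  using beatty_beatty(2,3)[OF assms(1)] assms(2) unfolding beatty_letter_def by simp

lemma sigma_append: "sigma (xs @ ys) = sigma xs @ sigma ys"
  unfolding sigma_def by simp

lemma sigma_beatty_word:
  "sigma (map beatty_letter [0..<L]) = map beatty_letter [0..<nat (beatty (L + 1)) - 1]"
proof (induction L)
  case 0
  have "beatty 1 = 1" unfolding beatty_def using phi_bounds by (simp add: floor_eq_iff)
  then show ?case by (simp add: sigma_def)
next
  case (Suc L)
  define p where "p = nat (beatty (L + 1)) - 1"
  have q: "1 \<le> beatty (L + 1)" using beatty_pos by simp
  have letter_p: "beatty_letter p = 0" unfolding p_def using beatty_letter_pred_beatty by simp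
  have "sigma (map beatty_letter [0..<Suc L]) = map beatty_letter [0..<p] @ sigma_letter (beatty_letter L)"
    using Suc.IH unfolding p_def by (simp add: sigma_append) (simp add: sigma_def)
  also have "\<dots> = map beatty_letter [0..<nat (beatty (Suc L + 1)) - 1]"
  proof (cases "beatty (L + 2) = beatty (L + 1) + 2")
    case True
    then have "beatty_letter L = 0" "beatty_letter (p + 1) = 1"
      "nat (beatty (Suc L + 1)) - 1 = p + 2"
      using beatty_letter_beatty[of "L + 1"] q unfolding beatty_letter_def p_def by auto
    then show ?thesis using letter_p by simp
  next
    case False
    then have "beatty (L + 2) = beatty (L + 1) + 1" using beatty_Suc_cases[of "L + 1"] by simp
    then have "beatty_letter L = 1" "nat (beatty (Suc L + 1)) - 1 = p + 1"
      using q unfolding beatty_letter_def p_def by auto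
    then show ?thesis using letter_p by simp
  qed
  finally show ?case .
qed

lemma fib_prefix_eq_beatty_word: "\<exists>L > k. fib_prefix k = map beatty_letter [0..<L]"
proof (induction k)
  case 0
  have "beatty 2 = 3" "beatty 1 = 1" unfolding beatty_def using phi_bounds by (simp_all add: floor_eq_iff)
  then have "beatty_letter 0 = 0" unfolding beatty_letter_def by (simp add: numeral_2_eq_2)
  then show ?case unfolding fib_prefix_def by (intro exI[of _ 1]) simp
next
  case (Suc k)
  then obtain L where L: "L > k" "fib_prefix k = map beatty_letter [0..<L]" by blast
  have "fib_prefix (Suc k) = sigma (fib_prefix k)" unfolding fib_prefix_def by simp
  also have "\<dots> = map beatty_letter [0..<nat (beatty (L + 1)) - 1]" using L(2) sigma_beatty_word by simp
  finally have prefix: "fib_prefix (Suc k) = map beatty_letter [0..<nat (beatty (L + 1)) - 1]" .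
  have "real (L + 2) \<le> real (L + 1) * phi"
  proof -
    have "2 * (1/2) \<le> real (L + 1) * (phi - 1)" using L(1) phi_bounds by (intro mult_mono) auto
    then show ?thesis by (simp add: algebra_simps)
  qed
  then have "int (L + 2) \<le> beatty (L + 1)" unfolding beatty_def by (simp add: le_floor_iff)
  then have "Suc k < nat (beatty (L + 1)) - 1" using L(1) by linarith
  with prefix show ?case by blast
qed

lemma fib_word_eq_beatty_letter: "fib_word i = beatty_letter i"
proof -
  obtain L where "L > Suc i" "fib_prefix (Suc i) = map beatty_letter [0..<L]"
    using fib_prefix_eq_beatty_word by blast
  then show ?thesis unfolding fib_word_def by simp
qed

lemma int_increasing_hits_window:
  fixes J :: "int \<Rightarrow> int"
  assumes incr: "\<And>a. J a < J (a + 1)" and step: "\<And>a. J (a + 1) \<le> J a + M"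
  shows "\<exists>a. K \<le> J a \<and> J a < K + M"
proof -
  have descend: "J (- int n) \<le> J 0 - int n" for n
  proof (induction n)
    case (Suc n)
    have "J (- int (Suc n)) < J (- int n)" using incr[of "- int (Suc n)"] by simp
    then show ?case using Suc by simp
  qed simp
  obtain a0 where "J a0 < K"
    using descend[of "nat (J 0 - K + 1)"] by (intro that[of "- int (nat (J 0 - K + 1))"]) linarith
  then show ?thesis
  proof (induction "nat (K - J a0)" arbitrary: a0 rule: less_induct)
    case less
    show ?case
    proof (cases "K \<le> J (a0 + 1)")
      case True
      then show ?thesis using step[of a0] less.prems by (intro exI[of _ "a0 + 1"]) auto
    next
      case False
      then show ?thesis using less.hyps[of "a0 + 1"] incr[of a0] by auto
    qed
  qed
qed

text \<open>For each \<open>a\<close> let \<open>B a\<close> be the unique \<open>b\<close> with \<open>a \<alpha> + b \<beta> \<in> [t, t + \<beta>)\<close>. Since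
  \<open>0 < -\<alpha> < \<beta>\<close>, \<open>B\<close> increases by 0 or 1 at each step, so \<open>a P + B a Q\<close> increases by between
  1 and \<open>P + Q\<close> and cannot jump over a window of length \<open>P + Q\<close>.\<close>

lemma lattice_window:
  fixes \<alpha> \<beta> t :: real and P Q K :: int
  assumes "\<alpha> < 0" "- \<alpha> < \<beta>" "1 \<le> P" "0 \<le> Q"
  shows "\<exists>a b. K \<le> a * P + b * Q \<and> a * P + b * Q < K + P + Q \<and>
           t \<le> of_int a * \<alpha> + of_int b * \<beta> \<and> of_int a * \<alpha> + of_int b * \<beta> < t + \<beta>"
proof -
  have \<beta>: "0 < \<beta>" using assms(1,2) by linarith
  define B where "B a = \<lceil>(t - of_int a * \<alpha>) / \<beta>\<rceil>" for a :: int
  have B_window: "t \<le> of_int a * \<alpha> + of_int (B a) * \<beta> \<and> of_int a * \<alpha> + of_int (B a) * \<beta> < t + \<beta>"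
    for a
  proof -
    have "(t - of_int a * \<alpha>) / \<beta> \<le> of_int (B a)" "of_int (B a) < (t - of_int a * \<alpha>) / \<beta> + 1"
      unfolding B_def by linarith+
    then show ?thesis using \<beta> by (simp add: field_simps)
  qed
  have B_step: "B a \<le> B (a + 1) \<and> B (a + 1) \<le> B a + 1" for a
  proof -
    define x where "x = (t - of_int a * \<alpha>) / \<beta>"
    have \<gamma>: "0 < - \<alpha> / \<beta>" "- \<alpha> / \<beta> < 1" using assms(1,2) \<beta> by (simp_all add: field_simps)
    have "(t - of_int (a + 1) * \<alpha>) / \<beta> = x + - \<alpha> / \<beta>"
      unfolding x_def by (simp add: diff_divide_distrib add_divide_distrib algebra_simps)
    then have "B (a + 1) = \<lceil>x + - \<alpha> / \<beta>\<rceil>" "B a = \<lceil>x\<rceil>"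
      unfolding B_def x_def by simp_all
    then show ?thesis using \<gamma> by (simp add: ceiling_mono ceiling_le_iff) linarith
  qed
  define J where "J a = a * P + B a * Q" for a
  have "J a < J (a + 1)" "J (a + 1) \<le> J a + (P + Q)" for a
    using B_step[of a] assms(3,4) mult_right_mono[of "B a" "B (a + 1)" Q]
      mult_right_mono[of "B (a + 1)" "B a + 1" Q]
    unfolding J_def by (auto simp: algebra_simps)
  then obtain a where "K \<le> J a" "J a < K + (P + Q)"
    using int_increasing_hits_window by blast
  then show ?thesis using B_window[of a] unfolding J_def by (intro exI[of _ a] exI[of _ "B a"]) auto
qed

definition fib_phi_error :: "nat \<Rightarrow> real" where
  "fib_phi_error k = real (fib k) * phi - real (fib (Suc k))"

lemma fib_phi_error_Suc: "fib_phi_error (Suc k) = - fib_phi_error k / phi"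
proof -
  have "fib_phi_error (Suc k) * phi = real (fib (Suc k)) * phi^2 - real (fib (Suc (Suc k))) * phi"
    by (simp add: fib_phi_error_def power2_eq_square algebra_simps)
  also have "\<dots> = - fib_phi_error k"
    unfolding phi_squared by (simp add: fib_phi_error_def algebra_simps)
  finally show ?thesis using phi_bounds by (simp add: field_simps)
qed

lemma abs_fib_phi_error: "\<bar>fib_phi_error k\<bar> = inverse (phi ^ k)"
proof (induction k)
  case 0
  then show ?case by (simp add: fib_phi_error_def)
next
  case (Suc k)
  then show ?case using phi_bounds by (simp add: fib_phi_error_Suc abs_div field_simps)
qed

lemma fib_lattice_window:
  "\<exists>a b :: int. 0 \<le> a * int (fib (Suc k)) + b * int (fib k) \<and>
     a * int (fib (Suc k)) + b * int (fib k) < int (fib (Suc (Suc k))) \<and>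
     t \<le> of_int a * fib_phi_error (Suc k) + of_int b * fib_phi_error k \<and>
     of_int a * fib_phi_error (Suc k) + of_int b * fib_phi_error k < t + inverse (phi ^ k)"
proof -
  let ?P = "int (fib (Suc k))" and ?Q = "int (fib k)"
  have PQ: "1 \<le> ?P" "0 \<le> ?Q" "?P + ?Q = int (fib (Suc (Suc k)))"
    using fib_neq_0_nat[of "Suc k"] by simp_all
  have "fib_phi_error k \<noteq> 0" using abs_fib_phi_error[of k] phi_bounds by auto
  then consider "0 < fib_phi_error k" | "fib_phi_error k < 0" by linarith
  then show ?thesis
  proof cases
    case 1
    then have "fib_phi_error (Suc k) < 0" "- fib_phi_error (Suc k) < fib_phi_error k"
      using phi_bounds by (simp_all add: fib_phi_error_Suc field_simps)
    from lattice_window[OF this PQ(1,2), of 0 t, unfolded add_0_left add.assoc PQ(3)]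
    obtain a b where "0 \<le> a * ?P + b * ?Q" "a * ?P + b * ?Q < int (fib (Suc (Suc k)))"
      "t \<le> of_int a * fib_phi_error (Suc k) + of_int b * fib_phi_error k"
      "of_int a * fib_phi_error (Suc k) + of_int b * fib_phi_error k < t + fib_phi_error k"
      by blast
    moreover have "fib_phi_error k = inverse (phi ^ k)" using 1 abs_fib_phi_error[of k] by simp
    ultimately show ?thesis by (intro exI[of _ a] exI[of _ b] conjI) linarith+
  next
    case 2
    then have "- fib_phi_error (Suc k) < 0" "- (- fib_phi_error (Suc k)) < - fib_phi_error k"
      using phi_bounds by (simp_all add: fib_phi_error_Suc field_simps)
    from lattice_window[OF this PQ(1,2), of "1 - (?P + ?Q)" t]
    obtain a b where "1 - (?P + ?Q) \<le> a * ?P + b * ?Q" "a * ?P + b * ?Q < 1"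
      "t \<le> of_int a * - fib_phi_error (Suc k) + of_int b * - fib_phi_error k"
      "of_int a * - fib_phi_error (Suc k) + of_int b * - fib_phi_error k < t + - fib_phi_error k"
      by auto
    moreover have "- fib_phi_error k = inverse (phi ^ k)" using 2 abs_fib_phi_error[of k] by simp
    moreover have "(- a) * ?P + (- b) * ?Q = - (a * ?P + b * ?Q)"
      "of_int (- a) * fib_phi_error (Suc k) + of_int (- b) * fib_phi_error k =
         of_int a * - fib_phi_error (Suc k) + of_int b * - fib_phi_error k"
      by simp_all
    ultimately show ?thesis
      using PQ(3) by (intro exI[of _ "- a"] exI[of _ "- b"] conjI) linarith+
  qed
qed

lemma frac_mult_phi_hits_interval:
  assumes "0 \<le> A" and "A + inverse (phi ^ k) \<le> 1"
  shows "\<exists>j < fib (Suc (Suc k)).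
           A \<le> frac (real (y + j) * phi) \<and> frac (real (y + j) * phi) < A + inverse (phi ^ k)"
proof -
  obtain a b :: int where
    J: "0 \<le> a * int (fib (Suc k)) + b * int (fib k)"
       "a * int (fib (Suc k)) + b * int (fib k) < int (fib (Suc (Suc k)))" and
    w: "A - frac (real y * phi) \<le> of_int a * fib_phi_error (Suc k) + of_int b * fib_phi_error k"
       "of_int a * fib_phi_error (Suc k) + of_int b * fib_phi_error k
          < A - frac (real y * phi) + inverse (phi ^ k)"
    using fib_lattice_window by blast
  define j where "j = nat (a * int (fib (Suc k)) + b * int (fib k))"
  define w where "w = of_int a * fib_phi_error (Suc k) + of_int b * fib_phi_error k"
  define N where "N = a * int (fib (Suc (Suc k))) + b * int (fib (Suc k))"
  have "real j * phi = of_int N + w"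
    using J(1) unfolding j_def N_def w_def fib_phi_error_def by (simp add: algebra_simps)
  then have sum: "real (y + j) * phi = of_int (\<lfloor>real y * phi\<rfloor> + N) + (frac (real y * phi) + w)"
    unfolding frac_def by (simp add: algebra_simps)
  have "0 \<le> frac (real y * phi) + w" "frac (real y * phi) + w < 1"
    using w assms unfolding w_def by linarith+
  then have "frac (real (y + j) * phi) = frac (real y * phi) + w"
    unfolding sum frac_add_of_int_left frac_eq by blast
  moreover have "j < fib (Suc (Suc k))" using J unfolding j_def by linarith
  ultimately show ?thesis using w unfolding w_def by (intro exI[of _ j]) auto
qed

lemma frac_mult_phi_carry_both_ways:
  assumes "inverse (phi ^ k) \<le> \<theta>" and "inverse (phi ^ k) \<le> 1 - \<theta>"
  obtains j0 j1 where "j0 < fib (Suc (Suc k))" "frac (real (y + j0) * phi) + \<theta> < 1"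
    and "j1 < fib (Suc (Suc k))" "1 \<le> frac (real (y + j1) * phi) + \<theta>"
proof -
  have "0 < inverse (phi ^ k)" using phi_bounds by simp
  then have \<theta>: "0 \<le> \<theta>" "\<theta> \<le> 1" using assms by linarith+
  obtain j0 where "j0 < fib (Suc (Suc k))" "frac (real (y + j0) * phi) < inverse (phi ^ k)"
    using frac_mult_phi_hits_interval[of 0 k y] assms \<theta> by auto
  moreover obtain j1 where "j1 < fib (Suc (Suc k))" "1 - \<theta> \<le> frac (real (y + j1) * phi)"
    using frac_mult_phi_hits_interval[of "1 - \<theta>" k y] assms \<theta> by auto
  ultimately show ?thesis using assms that by fastforce
qed

lemma beatty_add:
  "beatty (y + d) =
     beatty y + \<lfloor>real d * phi\<rfloor> + (if frac (real y * phi) + frac (real d * phi) < 1 then 0 else 1)"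
  unfolding beatty_def by (simp add: distrib_right floor_add)

lemma beatty_diff_const:
  assumes "\<forall>i < m. beatty_letter (x + i) = beatty_letter (y + i)" and "j \<le> m"
  shows "beatty (y + 1 + j) - beatty (x + 1 + j) = beatty (y + 1) - beatty (x + 1)"
  using assms(2)
proof (induction j)
  case (Suc j)
  have "beatty (y + j + 2) - beatty (y + j + 1) = beatty (x + j + 2) - beatty (x + j + 1)"
    using assms(1) Suc.prems beatty_letter_eq_iff[of "x + j" "y + j"] by (simp add: add.assoc)
  then show ?case using Suc by (simp add: add.assoc)
qed simp

lemma fib_factor_eq_imp_beatty_letter_eq:
  assumes "fib_factor x (x + m) = fib_factor y (y + m)" and "i < m"
  shows "beatty_letter (x + i) = beatty_letter (y + i)"
proof -
  have "fib_factor x (x + m) ! i = fib_factor y (y + m) ! i" using assms(1) by simp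
  then show ?thesis using assms(2) unfolding fib_factor_def by (simp add: fib_word_eq_beatty_letter)
qed

lemma fib_factor_eq_imp_carry_eq:
  assumes "fib_factor x (x + m) = fib_factor (x + d) (x + d + m)" and "j \<le> m"
  shows "frac (real (x + 1 + j) * phi) + frac (real d * phi) < 1 \<longleftrightarrow>
         frac (real (x + 1) * phi) + frac (real d * phi) < 1"
proof -
  have "beatty (x + d + 1 + j) - beatty (x + 1 + j) = beatty (x + d + 1) - beatty (x + 1)"
    using beatty_diff_const fib_factor_eq_imp_beatty_letter_eq[OF assms(1)] assms(2) by blast
  then have "beatty (x + 1 + j + d) - beatty (x + 1 + j) = beatty (x + 1 + d) - beatty (x + 1)"
    by (simp add: ac_simps)
  then show ?thesis unfolding beatty_add[of "x + 1 + j"] beatty_add[of "x + 1"] by (auto split: if_splits)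
qed

theorem proposition16:
  fixes n l :: nat
  assumes "n > 0" and "l > 0"
    and "phi powi (1 - int n) \<le>
           min (frac (2 * real l * real (fib n) * phi)) (1 - frac (2 * real l * real (fib n) * phi))"
  shows "\<forall>x::nat. fib_factor x (x + 2 * fib n) \<noteq>
           fib_factor (x + 2 * l * fib n) (x + 2 * l * fib n + 2 * fib n)"
proof (intro allI notI)
  fix x
  assume factors_eq: "fib_factor x (x + 2 * fib n) =
    fib_factor (x + 2 * l * fib n) (x + 2 * l * fib n + 2 * fib n)"
  obtain k where n: "n = Suc k" using assms(1) not0_implies_Suc by blast
  define \<theta> where "\<theta> = frac (real (2 * l * fib n) * phi)"
  have "inverse (phi ^ k) \<le> \<theta>" "inverse (phi ^ k) \<le> 1 - \<theta>"
    using assms(3) unfolding \<theta>_def n by (simp_all add: power_int_minus mult.assoc)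
  then obtain j0 j1 where
    j0: "j0 < fib (Suc (Suc k))" "frac (real (x + 1 + j0) * phi) + \<theta> < 1" and
    j1: "j1 < fib (Suc (Suc k))" "1 \<le> frac (real (x + 1 + j1) * phi) + \<theta>"
    by (rule frac_mult_phi_carry_both_ways)
  have "fib (Suc (Suc k)) \<le> 2 * fib n" using fib_Suc_mono[of k] unfolding n by simp
  then show False
    using fib_factor_eq_imp_carry_eq[OF factors_eq, of j0] fib_factor_eq_imp_carry_eq[OF factors_eq, of j1]
      j0 j1 unfolding \<theta>_def by linarith
qed

end
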